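(* For each integer $r\ge2$ there is a constant $C(r)$ such that the following holds. Let $K\ge1$ and $N\le r(K+1)$ be positive integers, let $y:=r-N/(K+1)\ge0$, and let $\iota\ge1$ be an integer. Then the number of sequences $\mathbf j=(j_1,\dots,j_r)$ of distinct elements of $\mathbb Z/N\mathbb Z$ with $M(r+1,\mathbf j)=\iota$ is at most $C(r)\,N\,(yK+\iota)^{r-2}$.
   Context: For a sequence $\mathbf j=(j_1,\dots,j_r)$ of distinct elements of $\mathbb Z/N\mathbb Z\cong\{1,\dots,N\}$ and $1\le s\le r+1$, let $\mathrm{missed}(s,\mathbf j):=\{i\in\{1,\dots,N\}: i-j_t\notin\{0,1,\dots,K\}\ (\mathrm{mod}\ N)\text{ for all }t<s\}$ and $M(s,\mathbf j):=|\mathrm{missed}(s,\mathbf j)|$. *)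

theory Defs
  imports Complex_Main
begin

text \<open>Elements of Z/NZ are represented by {1..N}; a sequence j = (j_1,...,j_r) is a list
  js with js ! (t-1) = j_t.  Congruence mod N is computed via int mod.\<close>

definition missed :: "nat \<Rightarrow> nat \<Rightarrow> nat \<Rightarrow> nat list \<Rightarrow> nat set" where
  "missed N K s js = {i \<in> {1..N}. \<forall>t\<in>{1..<s}.
      (int i - int (js ! (t - 1))) mod int N \<notin> {0..int K}}"

definition M :: "nat \<Rightarrow> nat \<Rightarrow> nat \<Rightarrow> nat list \<Rightarrow> nat" where
  "M N K s js = card (missed N K s js)"

end

theory Submission
  imports Defs "HOL-Library.FuncSet"
begin

text \<open>View \<open>j\<^sub>1, \<dots>, j\<^sub>r\<close> as \<open>r\<close> distinct points on the cycle \<open>\<int>/N\<int>\<close>. Each point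
  owns the arc up to the next point; the arc lengths \<open>g\<^sub>t\<close> sum to \<open>N\<close>, and the number of
  missed elements is \<open>\<Sum>\<^sub>t max (g\<^sub>t - (K + 1)) 0\<close>. So the excess vector
  \<open>d\<^sub>t = g\<^sub>t - (K + 1)\<close> has total \<open>N - r (K + 1) = - y (K + 1) \<le> 0\<close> and positive part \<open>\<iota>\<close>.
  The sequence is recovered from \<open>j\<^sub>1\<close>, the cyclic order of its entries and \<open>d\<close>. In turn
  \<open>d\<close> has a positive and a negative coordinate, which are determined by the other \<open>r - 2\<close>
  coordinates, and these range over an interval of length \<open>2 \<iota> + y (K + 1) + 1 \<le> 3 (y K + \<iota>)\<close>.
  Altogether there are at most \<open>N * 2 ^ (r * r) * r ^ 2 * (3 (y K + \<iota>)) ^ (r - 2)\<close> sequences.\<close>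

definition cdist :: "int \<Rightarrow> int \<Rightarrow> int \<Rightarrow> int" where
  "cdist N x y = (y - x) mod N"

lemma cdist_nonneg: "0 < N \<Longrightarrow> 0 \<le> cdist N x y"
  by (simp add: cdist_def)

lemma cdist_less: "0 < N \<Longrightarrow> cdist N x y < N"
  by (simp add: cdist_def)

lemma cdist_eq_0_iff: "cdist N x y = 0 \<longleftrightarrow> x mod N = y mod N"
proof -
  have "cdist N x y = 0 \<longleftrightarrow> N dvd y - x"
    by (simp add: cdist_def dvd_eq_mod_eq_0)
  also have "\<dots> \<longleftrightarrow> y mod N = x mod N"
    by (simp add: mod_eq_dvd_iff)
  finally show ?thesis
    by auto
qed

lemma mod_cases_below_twice:
  fixes s N :: int
  assumes "0 \<le> s" "s < 2 * N"
  shows "s = s mod N \<or> s = s mod N + N"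
proof (cases "s < N")
  case True
  then show ?thesis
    using assms(1) by simp
next
  case False
  then have "(s - N) mod N = s - N"
    using assms(2) by (intro mod_pos_pos_trivial) auto
  then show ?thesis
    by simp
qed

lemma cdist_triangle_cases:
  assumes "0 < N"
  shows "cdist N x y + cdist N y z = cdist N x z \<or> cdist N x y + cdist N y z = cdist N x z + N"
proof -
  have "(cdist N x y + cdist N y z) mod N = cdist N x z"
    unfolding cdist_def by (simp add: mod_add_eq)
  moreover have "0 \<le> cdist N x y + cdist N y z" "cdist N x y + cdist N y z < 2 * N"
    using cdist_nonneg[OF assms, of x y] cdist_nonneg[OF assms, of y z]
      cdist_less[OF assms, of x y] cdist_less[OF assms, of y z] by linarith+
  ultimately show ?thesis
    using mod_cases_below_twice by metis
qed

lemma cdist_eq_cdist_iff_right: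
  assumes "0 < N"
  shows "cdist N c x = cdist N c y \<longleftrightarrow> x mod N = y mod N"
proof
  assume "cdist N c x = cdist N c y"
  then have "cdist N x y = 0"
    using cdist_triangle_cases[OF assms, of c x y] cdist_less[OF assms, of x y] by auto
  then show "x mod N = y mod N"
    by (simp add: cdist_eq_0_iff)
next
  assume "x mod N = y mod N"
  then show "cdist N c x = cdist N c y"
    unfolding cdist_def by (intro mod_diff_cong) auto
qed

lemma cdist_eq_cdist_iff_left:
  assumes "0 < N"
  shows "cdist N x c = cdist N y c \<longleftrightarrow> x mod N = y mod N"
proof
  assume "cdist N x c = cdist N y c"
  then have "cdist N y x = 0"
    using cdist_triangle_cases[OF assms, of y x c] cdist_less[OF assms, of y x] by auto
  then show "x mod N = y mod N"
    by (simp add: cdist_eq_0_iff)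
next
  assume "x mod N = y mod N"
  then show "cdist N x c = cdist N y c"
    unfolding cdist_def by (intro mod_diff_cong) auto
qed

lemma inj_on_mod_interval: "inj_on (\<lambda>x. x mod N) {1..N::int}"
proof -
  have "x mod N = (if x = N then 0 else x)" if "x \<in> {1..N}" for x
    using that by auto
  then show ?thesis
    by (auto simp: inj_on_def split: if_splits)
qed

lemma bij_betw_cdist:
  assumes "0 < N"
  shows "bij_betw (cdist N c) {1..N} {0..<N}"
proof -
  have inj: "inj_on (cdist N c) {1..N}"
    using inj_on_mod_interval by (auto simp: inj_on_def cdist_eq_cdist_iff_right[OF assms])
  moreover have "cdist N c ` {1..N} = {0..<N}"
  proof (rule card_subset_eq)
    show "cdist N c ` {1..N} \<subseteq> {0..<N}"
      using cdist_nonneg[OF assms] cdist_less[OF assms] by auto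
    show "card (cdist N c ` {1..N}) = card {0..<N}"
      using card_image[OF inj] by simp
  qed simp
  ultimately show ?thesis
    by (simp add: bij_betw_def)
qed

lemma card_filter_cdist:
  "0 < N \<Longrightarrow> card {i \<in> {1..N}. Q (cdist N c i)} = card {v \<in> {0..<N}. Q v}"
  by (rule bij_betw_same_card, rule bij_betw_Collect[OF bij_betw_cdist]) auto

definition excess_vectors :: "'a set \<Rightarrow> nat \<Rightarrow> int \<Rightarrow> ('a \<Rightarrow> int) set" where
  "excess_vectors T n c = {d \<in> extensional T. (\<Sum>t\<in>T. max (d t) 0) = int n \<and> sum d T = c}"

lemma excess_vectors_subset_PiE:
  assumes "finite T" "c \<le> int n"
  shows "excess_vectors T n c \<subseteq> (\<Pi>\<^sub>E t\<in>T. {c - int n..int n})"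
proof
  fix d assume d: "d \<in> excess_vectors T n c"
  then have pos: "(\<Sum>t\<in>T. max (d t) 0) = int n" and total: "sum d T = c"
    unfolding excess_vectors_def by auto
  have "d t \<in> {c - int n..int n}" if t: "t \<in> T" for t
  proof -
    have "max (d t) 0 \<le> (\<Sum>t\<in>T. max (d t) 0)"
      using t assms(1) by (intro member_le_sum) auto
    moreover have "c = d t + sum d (T - {t})"
      using total t assms(1) by (simp add: sum.remove)
    moreover have "sum d (T - {t}) \<le> (\<Sum>s\<in>T - {t}. max (d s) 0)"
      by (intro sum_mono) auto
    moreover have "(\<Sum>s\<in>T - {t}. max (d s) 0) \<le> (\<Sum>s\<in>T. max (d s) 0)"
      using assms(1) by (intro sum_mono2) auto
    ultimately show ?thesis
      using pos by auto
  qed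
  then show "d \<in> (\<Pi>\<^sub>E t\<in>T. {c - int n..int n})"
    using d unfolding excess_vectors_def PiE_iff by blast
qed

lemma finite_excess_vectors: "finite T \<Longrightarrow> c \<le> int n \<Longrightarrow> finite (excess_vectors T n c)"
  by (rule finite_subset[OF excess_vectors_subset_PiE]) (auto intro: finite_PiE)

lemma excess_vectors_eqI:
  assumes d: "d \<in> excess_vectors T n c" and d': "d' \<in> excess_vectors T n c"
    and T: "finite T" "a \<in> T" "b \<in> T" "a \<noteq> b"
    and signs: "0 < d a" "0 < d' a" "d b < 0" "d' b < 0"
    and rest: "\<And>t. t \<in> T - {a, b} \<Longrightarrow> d t = d' t"
  shows "d = d'"
proof -
  have split: "sum f T = f a + f b + sum f (T - {a, b})" for f :: "_ \<Rightarrow> int"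
    using sum.subset_diff[of "{a, b}" T f] T by auto
  have "(\<Sum>t\<in>T - {a, b}. max (d t) 0) = (\<Sum>t\<in>T - {a, b}. max (d' t) 0)"
    and "sum d (T - {a, b}) = sum d' (T - {a, b})"
    using rest by (auto intro: sum.cong)
  moreover have "(\<Sum>t\<in>T. max (d t) 0) = d a + (\<Sum>t\<in>T - {a, b}. max (d t) 0)"
    and "(\<Sum>t\<in>T. max (d' t) 0) = d' a + (\<Sum>t\<in>T - {a, b}. max (d' t) 0)"
    using split[of "\<lambda>t. max (d t) 0"] split[of "\<lambda>t. max (d' t) 0"] signs by simp_all
  moreover have "sum d T = d a + d b + sum d (T - {a, b})" "sum d' T = d' a + d' b + sum d' (T - {a, b})"
    using split by blast+
  moreover have "(\<Sum>t\<in>T. max (d t) 0) = int n" "(\<Sum>t\<in>T. max (d' t) 0) = int n"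
    "sum d T = c" "sum d' T = c"
    using d d' unfolding excess_vectors_def by auto
  ultimately have "d a = d' a" "d b = d' b"
    by linarith+
  then have "d t = d' t" if "t \<in> T" for t
    using rest that by (cases "t = a \<or> t = b") auto
  moreover have "d \<in> extensional T" "d' \<in> extensional T"
    using d d' unfolding excess_vectors_def by auto
  ultimately show ?thesis
    by (intro extensionalityI[of d T d'])
qed

lemma excess_vectors_signs:
  assumes d: "d \<in> excess_vectors T n c" and n: "0 < n" and c: "c < int n"
  shows "\<exists>a\<in>T. \<exists>b\<in>T. 0 < d a \<and> d b < 0"
proof -
  have "\<exists>a\<in>T. 0 < d a"
  proof (rule ccontr)
    assume "\<not> (\<exists>a\<in>T. 0 < d a)"
    then have "(\<Sum>t\<in>T. max (d t) 0) = 0"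
      by (intro sum.neutral) (auto simp: not_less)
    then show False
      using d n unfolding excess_vectors_def by simp
  qed
  moreover have "\<exists>b\<in>T. d b < 0"
  proof (rule ccontr)
    assume "\<not> (\<exists>b\<in>T. d b < 0)"
    then have "(\<Sum>t\<in>T. max (d t) 0) = sum d T"
      by (intro sum.cong) (auto simp: not_less)
    then show False
      using d c unfolding excess_vectors_def by simp
  qed
  ultimately show ?thesis
    by blast
qed

lemma card_excess_vectors_signs_le:
  assumes T: "finite T" "a \<in> T" "b \<in> T" "a \<noteq> b" and c: "c \<le> int n"
  shows "card {d \<in> excess_vectors T n c. 0 < d a \<and> d b < 0} \<le> nat (2 * int n - c + 1) ^ (card T - 2)"
proof -
  let ?W = "{d \<in> excess_vectors T n c. 0 < d a \<and> d b < 0}"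
  let ?R = "{c - int n..int n}"
  have "inj_on (\<lambda>d. restrict d (T - {a, b})) ?W"
  proof (rule inj_onI)
    fix d d' assume d: "d \<in> ?W" and d': "d' \<in> ?W"
      and eq: "restrict d (T - {a, b}) = restrict d' (T - {a, b})"
    have rest: "d t = d' t" if "t \<in> T - {a, b}" for t
      using fun_cong[OF eq, of t] that by simp
    have mem: "d \<in> excess_vectors T n c" "d' \<in> excess_vectors T n c"
      "0 < d a" "0 < d' a" "d b < 0" "d' b < 0"
      using d d' by auto
    show "d = d'"
      by (rule excess_vectors_eqI[OF mem(1,2) T mem(3-6) rest])
  qed
  moreover have "(\<lambda>d. restrict d (T - {a, b})) ` ?W \<subseteq> (\<Pi>\<^sub>E t\<in>T - {a, b}. ?R)"
  proof (rule image_subsetI)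
    fix d assume "d \<in> ?W"
    then have "d \<in> (\<Pi>\<^sub>E t\<in>T. ?R)"
      using excess_vectors_subset_PiE[OF T(1) c] by blast
    then have "\<forall>t\<in>T - {a, b}. d t \<in> ?R"
      unfolding PiE_iff by blast
    then show "restrict d (T - {a, b}) \<in> (\<Pi>\<^sub>E t\<in>T - {a, b}. ?R)"
      by (simp only: restrict_PiE_iff)
  qed
  ultimately have "card ?W \<le> card (\<Pi>\<^sub>E t\<in>T - {a, b}. ?R)"
    using T by (intro card_inj_on_le finite_PiE) auto
  also have "card (T - {a, b}) = card T - 2"
    using card_Diff_subset[of "{a, b}" T] T by simp
  then have "card (\<Pi>\<^sub>E t\<in>T - {a, b}. ?R) = nat (2 * int n - c + 1) ^ (card T - 2)"
    using T by (simp add: card_PiE)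
  finally show ?thesis .
qed

lemma card_excess_vectors_le:
  assumes T: "finite T" and n: "0 < n" and c: "c < int n"
  shows "card (excess_vectors T n c) \<le> card T ^ 2 * nat (2 * int n - c + 1) ^ (card T - 2)"
proof -
  let ?P = "{(a, b) \<in> T \<times> T. a \<noteq> b}"
  let ?L = "nat (2 * int n - c + 1)"
  define W where "W ab = {d \<in> excess_vectors T n c. 0 < d (fst ab) \<and> d (snd ab) < 0}" for ab
  have "excess_vectors T n c = (\<Union>ab\<in>?P. W ab)"
  proof
    show "excess_vectors T n c \<subseteq> (\<Union>ab\<in>?P. W ab)"
    proof
      fix d assume d: "d \<in> excess_vectors T n c"
      then obtain a b where "a \<in> T" "b \<in> T" "0 < d a" "d b < 0"
        using excess_vectors_signs[OF d n c] by blast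
      then have "(a, b) \<in> ?P" "d \<in> W (a, b)"
        using d unfolding W_def by auto
      then show "d \<in> (\<Union>ab\<in>?P. W ab)"
        by blast
    qed
  qed (auto simp: W_def)
  moreover have "finite ?P"
    by (rule finite_subset[of _ "T \<times> T"]) (use T in auto)
  ultimately have "card (excess_vectors T n c) \<le> (\<Sum>ab\<in>?P. card (W ab))"
    using card_UN_le[of ?P W] by simp
  also have "\<dots> \<le> (\<Sum>ab\<in>?P. ?L ^ (card T - 2))"
    using card_excess_vectors_signs_le[OF T _ _ _ less_imp_le[OF c]]
    by (intro sum_mono) (auto simp: W_def)
  also have "\<dots> = card ?P * ?L ^ (card T - 2)"
    by simp
  also have "card ?P \<le> card (T \<times> T)"
    using T by (intro card_mono) auto
  finally show ?thesis
    using T by (simp add: card_cartesian_product power2_eq_square)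
qed

locale cyclic_points =
  fixes N :: int and T :: "'a set" and p :: "'a \<Rightarrow> int"
  assumes modulus_pos: "0 < N"
    and two_le_card: "2 \<le> card T"
    and inj_on_residues: "inj_on (\<lambda>t. p t mod N) T"
begin

lemma finite_points: "finite T"
  using two_le_card card.infinite by force

lemma points_nonempty: "T \<noteq> {}"
  using two_le_card by auto

lemma other_point: "t \<in> T \<Longrightarrow> T - {t} \<noteq> {}"
proof
  assume "t \<in> T" "T - {t} = {}"
  then have "T = {t}"
    by blast
  then show False
    using two_le_card by simp
qed

lemma cdist_points_pos:
  assumes "s \<in> T" "t \<in> T" "s \<noteq> t"
  shows "0 < cdist N (p t) (p s)"
proof -
  have "p t mod N \<noteq> p s mod N"
    using inj_on_residues assms unfolding inj_on_def by metis
  then have "cdist N (p t) (p s) \<noteq> 0"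
    by (simp add: cdist_eq_0_iff)
  then show ?thesis
    using cdist_nonneg[OF modulus_pos, of "p t" "p s"] by linarith
qed

definition gap :: "'a \<Rightarrow> int" where
  "gap t = Min ((\<lambda>s. cdist N (p t) (p s)) ` (T - {t}))"

definition arc :: "'a \<Rightarrow> int set" where
  "arc t = {i \<in> {1..N}. cdist N (p t) i < gap t}"

definition offset_order :: "'a \<Rightarrow> ('a \<times> 'a) set" where
  "offset_order t0 = {(s, t) \<in> T \<times> T. cdist N (p t0) (p s) < cdist N (p t0) (p t)}"

lemma offset_order_subset: "offset_order t0 \<subseteq> T \<times> T"
  unfolding offset_order_def by blast

lemma gap_attained: "t \<in> T \<Longrightarrow> \<exists>s \<in> T - {t}. gap t = cdist N (p t) (p s)"
proof -
  assume "t \<in> T"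
  then have "gap t \<in> (\<lambda>s. cdist N (p t) (p s)) ` (T - {t})"
    unfolding gap_def using finite_points other_point by (intro Min_in) auto
  then show ?thesis
    by auto
qed

lemma gap_le: "t \<in> T \<Longrightarrow> s \<in> T \<Longrightarrow> s \<noteq> t \<Longrightarrow> gap t \<le> cdist N (p t) (p s)"
  unfolding gap_def using finite_points by (intro Min_le) auto

lemma gap_pos: "t \<in> T \<Longrightarrow> 0 < gap t"
  using gap_attained cdist_points_pos by (metis DiffD1 DiffD2 singletonI)

lemma gap_less: "t \<in> T \<Longrightarrow> gap t < N"
  using gap_attained cdist_less[OF modulus_pos] by metis

lemma nearest_point_iff:
  assumes t: "t \<in> T"
  shows "cdist N (p t) i < gap t \<longleftrightarrow> (\<forall>s\<in>T. cdist N (p t) i \<le> cdist N (p s) i)"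
proof
  assume near: "cdist N (p t) i < gap t"
  show "\<forall>s\<in>T. cdist N (p t) i \<le> cdist N (p s) i"
  proof
    fix s assume s: "s \<in> T"
    show "cdist N (p t) i \<le> cdist N (p s) i"
    proof (cases "s = t")
      case False
      then have "gap t \<le> cdist N (p t) (p s)"
        using gap_le t s by blast
      then show ?thesis
        using near cdist_triangle_cases[OF modulus_pos, of "p t" "p s" i]
          cdist_less[OF modulus_pos, of "p t" "p s"] cdist_nonneg[OF modulus_pos, of "p s" i]
        by linarith
    qed simp
  qed
next
  assume nearest: "\<forall>s\<in>T. cdist N (p t) i \<le> cdist N (p s) i"
  obtain s where s: "s \<in> T" "s \<noteq> t" "gap t = cdist N (p t) (p s)"
    using gap_attained t by blast
  have "cdist N (p t) i \<le> cdist N (p s) i"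
    using nearest s(1) by blast
  then show "cdist N (p t) i < gap t"
    using s(3) cdist_triangle_cases[OF modulus_pos, of "p t" "p s" i]
      cdist_less[OF modulus_pos, of "p s" i] cdist_points_pos[OF s(1) t s(2)]
    by linarith
qed

lemma nearest_point_exists: "\<exists>t\<in>T. \<forall>s\<in>T. cdist N (p t) i \<le> cdist N (p s) i"
proof -
  obtain t where "is_arg_min (\<lambda>t. cdist N (p t) i) (\<lambda>t. t \<in> T) t"
    using ex_is_arg_min_if_finite[OF finite_points points_nonempty] by blast
  then show ?thesis
    unfolding is_arg_min_linorder by blast
qed

lemma arcs_cover:
  assumes "i \<in> {1..N}"
  shows "\<exists>t\<in>T. i \<in> arc t"
proof -
  obtain t where t: "t \<in> T" "\<forall>s\<in>T. cdist N (p t) i \<le> cdist N (p s) i"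
    using nearest_point_exists by blast
  then have "cdist N (p t) i < gap t"
    using nearest_point_iff[OF t(1)] by blast
  then show ?thesis
    using t(1) assms unfolding arc_def by blast
qed

lemma arcs_disjoint:
  assumes s: "s \<in> T" and t: "t \<in> T" and "s \<noteq> t"
  shows "arc s \<inter> arc t = {}"
proof (rule ccontr)
  assume "arc s \<inter> arc t \<noteq> {}"
  then obtain i where "cdist N (p s) i < gap s" "cdist N (p t) i < gap t"
    unfolding arc_def by blast
  then have "cdist N (p s) i \<le> cdist N (p t) i" "cdist N (p t) i \<le> cdist N (p s) i"
    using nearest_point_iff[OF s] nearest_point_iff[OF t] s t by blast+
  then have "p s mod N = p t mod N"
    using cdist_eq_cdist_iff_left[OF modulus_pos] by (metis order.antisym)
  then show False
    using inj_on_residues s t \<open>s \<noteq> t\<close> unfolding inj_on_def by blast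
qed

lemma card_arc: "t \<in> T \<Longrightarrow> int (card (arc t)) = gap t"
proof -
  assume t: "t \<in> T"
  have "card (arc t) = card {v \<in> {0..<N}. v < gap t}"
    unfolding arc_def by (rule card_filter_cdist[OF modulus_pos])
  also have "{v \<in> {0..<N}. v < gap t} = {0..<gap t}"
    using gap_less[OF t] by auto
  finally show ?thesis
    using gap_pos[OF t] by simp
qed

lemma arc_subset: "arc t \<subseteq> {1..N}"
  unfolding arc_def by auto

lemma finite_arc: "finite (arc t)"
  using arc_subset by (rule finite_subset) simp

lemma card_UN_arcs: "S \<subseteq> T \<Longrightarrow> int (card (\<Union>t\<in>S. arc t)) = (\<Sum>t\<in>S. gap t)"
proof -
  assume S: "S \<subseteq> T"
  have "card (\<Union>t\<in>S. arc t) = (\<Sum>t\<in>S. card (arc t))"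
  proof (rule card_UN_disjoint)
    show "finite S"
      using S finite_points by (rule finite_subset)
    show "\<forall>t\<in>S. finite (arc t)"
      using finite_arc by blast
    show "\<forall>s\<in>S. \<forall>t\<in>S. s \<noteq> t \<longrightarrow> arc s \<inter> arc t = {}"
      using S arcs_disjoint by blast
  qed
  then show ?thesis
    using S card_arc by (simp add: subset_iff)
qed

lemma sum_gap: "(\<Sum>t\<in>T. gap t) = N"
proof -
  have "(\<Union>t\<in>T. arc t) = {1..N}"
  proof
    show "(\<Union>t\<in>T. arc t) \<subseteq> {1..N}"
      using arc_subset by blast
    show "{1..N} \<subseteq> (\<Union>t\<in>T. arc t)"
      using arcs_cover by blast
  qed
  then show ?thesis
    using card_UN_arcs[of T] modulus_pos by simp
qed

lemma far_points_Int_arc: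
  assumes t: "t \<in> T"
  shows "{i \<in> {1..N}. \<forall>s\<in>T. K < cdist N (p s) i} \<inter> arc t
    = {i \<in> {1..N}. K < cdist N (p t) i \<and> cdist N (p t) i < gap t}"
proof (intro equalityI subsetI)
  fix i assume "i \<in> {i \<in> {1..N}. \<forall>s\<in>T. K < cdist N (p s) i} \<inter> arc t"
  then show "i \<in> {i \<in> {1..N}. K < cdist N (p t) i \<and> cdist N (p t) i < gap t}"
    using t by (simp add: arc_def)
next
  fix i assume i: "i \<in> {i \<in> {1..N}. K < cdist N (p t) i \<and> cdist N (p t) i < gap t}"
  then have "\<forall>s\<in>T. cdist N (p t) i \<le> cdist N (p s) i"
    using nearest_point_iff[OF t] by simp
  then have "\<forall>s\<in>T. K < cdist N (p s) i"
    using i by (auto intro: order_less_le_trans)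
  then show "i \<in> {i \<in> {1..N}. \<forall>s\<in>T. K < cdist N (p s) i} \<inter> arc t"
    using i by (simp add: arc_def)
qed

lemma card_far_points:
  assumes "0 \<le> K"
  shows "int (card {i \<in> {1..N}. \<forall>t\<in>T. K < cdist N (p t) i}) = (\<Sum>t\<in>T. max (gap t - (K + 1)) 0)"
proof -
  define F where "F = {i \<in> {1..N}. \<forall>t\<in>T. K < cdist N (p t) i}"
  have "F \<subseteq> {1..N}"
    unfolding F_def by blast
  then have "F = (\<Union>t\<in>T. F \<inter> arc t)"
    using arcs_cover by blast
  also have "card \<dots> = (\<Sum>t\<in>T. card (F \<inter> arc t))"
  proof (rule card_UN_disjoint)
    show "\<forall>t\<in>T. finite (F \<inter> arc t)"
      using finite_arc by blast
    show "\<forall>s\<in>T. \<forall>t\<in>T. s \<noteq> t \<longrightarrow> F \<inter> arc s \<inter> (F \<inter> arc t) = {}"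
      using arcs_disjoint by blast
  qed (rule finite_points)
  finally have "card F = (\<Sum>t\<in>T. card (F \<inter> arc t))" .
  moreover have "int (card (F \<inter> arc t)) = max (gap t - (K + 1)) 0" if t: "t \<in> T" for t
  proof -
    have "card (F \<inter> arc t) = card {v \<in> {0..<N}. K < v \<and> v < gap t}"
      unfolding F_def far_points_Int_arc[OF t] by (rule card_filter_cdist[OF modulus_pos])
    also have "{v \<in> {0..<N}. K < v \<and> v < gap t} = {K + 1..<gap t}"
      using gap_less[OF t] assms by auto
    finally show ?thesis
      by simp
  qed
  ultimately show ?thesis
    unfolding F_def by simp
qed

lemma initial_segment_eq_UN_arcs:
  assumes t0: "t0 \<in> T" and t: "t \<in> T"
  shows "{i \<in> {1..N}. cdist N (p t0) i < cdist N (p t0) (p t)}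
    = (\<Union>s \<in> {s. (s, t) \<in> offset_order t0}. arc s)"
    (is "?L = ?R")
proof -
  let ?c = "cdist N (p t0)"
  have nonneg: "\<And>x y. 0 \<le> cdist N x y" and less: "\<And>x y. cdist N x y < N"
    using cdist_nonneg cdist_less modulus_pos by auto
  have "?L \<subseteq> ?R"
  proof
    fix i assume i: "i \<in> ?L"
    obtain s where s: "s \<in> T" "i \<in> arc s"
      using arcs_cover i by blast
    have "cdist N (p s) i \<le> ?c i"
      using s nearest_point_iff t0 unfolding arc_def by blast
    moreover have "?c i < ?c (p t)"
      using i by blast
    ultimately have "?c (p s) < ?c (p t)"
      using cdist_triangle_cases[OF modulus_pos, of "p t0" "p s" i] nonneg[of "p s" i]
        less[of "p t0" "p s"]
      by linarith
    then show "i \<in> ?R"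
      using s t unfolding offset_order_def by blast
  qed
  moreover have "?R \<subseteq> ?L"
  proof
    fix i assume "i \<in> ?R"
    then obtain s where s: "s \<in> T" "?c (p s) < ?c (p t)" and i: "i \<in> arc s"
      unfolding offset_order_def by blast
    then have "s \<noteq> t"
      by blast
    then have "gap s \<le> cdist N (p s) (p t)"
      using gap_le[OF s(1) t] by blast
    moreover have "cdist N (p s) i < gap s" "i \<in> {1..N}"
      using i unfolding arc_def by auto
    moreover have "?c i < ?c (p t)"
      using calculation s(2) cdist_triangle_cases[OF modulus_pos, of "p t0" "p s" "p t"]
        cdist_triangle_cases[OF modulus_pos, of "p t0" "p s" i] nonneg[of "p s" i]
        less[of "p t0" i] less[of "p s" "p t"] nonneg[of "p t0" "p s"]
      by linarith
    ultimately show "i \<in> ?L"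
      by blast
  qed
  ultimately show ?thesis
    by blast
qed

lemma offset_eq_sum_gaps:
  assumes t0: "t0 \<in> T" and t: "t \<in> T"
  shows "cdist N (p t0) (p t) = (\<Sum>s | (s, t) \<in> offset_order t0. gap s)"
proof -
  let ?c = "cdist N (p t0) (p t)"
  have "{s. (s, t) \<in> offset_order t0} \<subseteq> T"
    using offset_order_subset by blast
  then have "int (card {i \<in> {1..N}. cdist N (p t0) i < ?c}) = (\<Sum>s | (s, t) \<in> offset_order t0. gap s)"
    using card_UN_arcs initial_segment_eq_UN_arcs[OF t0 t] by simp
  moreover have "card {i \<in> {1..N}. cdist N (p t0) i < ?c} = card {v \<in> {0..<N}. v < ?c}"
    by (rule card_filter_cdist[OF modulus_pos])
  moreover have "{v \<in> {0..<N}. v < ?c} = {0..<?c}"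
    using cdist_less[OF modulus_pos, of "p t0" "p t"] by auto
  ultimately show ?thesis
    using cdist_nonneg[OF modulus_pos, of "p t0" "p t"] by simp
qed

lemma gap_excess_mem_excess_vectors:
  assumes "0 \<le> K"
  shows "restrict (\<lambda>t. gap t - (K + 1)) T
    \<in> excess_vectors T (card {i \<in> {1..N}. \<forall>t\<in>T. K < cdist N (p t) i}) (N - int (card T) * (K + 1))"
proof -
  have "(\<Sum>t\<in>T. max (restrict (\<lambda>t. gap t - (K + 1)) T t) 0) = (\<Sum>t\<in>T. max (gap t - (K + 1)) 0)"
    by (rule sum.cong) auto
  moreover have "(\<Sum>t\<in>T. restrict (\<lambda>t. gap t - (K + 1)) T t) = (\<Sum>t\<in>T. gap t - (K + 1))"
    by (rule sum.cong) auto
  ultimately show ?thesis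
    unfolding excess_vectors_def using card_far_points[OF assms] sum_gap
    by (simp add: sum_subtractf)
qed

end

lemma cyclic_points_residues_eqI:
  assumes P: "cyclic_points N T p" and Q: "cyclic_points N T q"
    and t0: "t0 \<in> T" "p t0 = q t0"
    and order: "cyclic_points.offset_order N T p t0 = cyclic_points.offset_order N T q t0"
    and gaps: "\<And>t. t \<in> T \<Longrightarrow> cyclic_points.gap N T p t = cyclic_points.gap N T q t"
    and t: "t \<in> T"
  shows "p t mod N = q t mod N"
proof -
  interpret P: cyclic_points N T p by (fact P)
  interpret Q: cyclic_points N T q by (fact Q)
  have sub: "{s. (s, t) \<in> P.offset_order t0} \<subseteq> T"
    using P.offset_order_subset by blast
  have "cdist N (p t0) (p t) = (\<Sum>s | (s, t) \<in> P.offset_order t0. P.gap s)"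
    by (rule P.offset_eq_sum_gaps[OF t0(1) t])
  also have "\<dots> = (\<Sum>s | (s, t) \<in> Q.offset_order t0. Q.gap s)"
    using order gaps sub by (intro sum.cong) auto
  also have "\<dots> = cdist N (q t0) (q t)"
    by (rule Q.offset_eq_sum_gaps[OF t0(1) t, symmetric])
  finally show ?thesis
    using cdist_eq_cdist_iff_right[OF P.modulus_pos] t0(2) by simp
qed

lemma card_int_interval_filter: "card {i \<in> {1..int n}. Q i} = card {i \<in> {1..n}. Q (int i)}"
proof -
  have "{i \<in> {1..int n}. Q i} = int ` {i \<in> {1..n}. Q (int i)}"
  proof (intro equalityI subsetI)
    fix i assume "i \<in> {i \<in> {1..int n}. Q i}"
    then show "i \<in> int ` {i \<in> {1..n}. Q (int i)}"
      by (intro image_eqI[of i int "nat i"]) auto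
  qed auto
  then show ?thesis
    by (simp add: card_image)
qed

definition positions :: "nat list \<Rightarrow> nat \<Rightarrow> int" where
  "positions js = (\<lambda>t. int (js ! t))"

lemma M_eq_card_far_points:
  assumes "0 < N"
  shows "M N K (length js + 1) js
    = card {i \<in> {1..int N}. \<forall>t\<in>{..<length js}. int K < cdist (int N) (positions js t) i}"
proof -
  have shift: "(\<forall>t\<in>{1..<n + 1}. P (t - 1)) \<longleftrightarrow> (\<forall>t\<in>{..<n}. P t)" for n and P :: "nat \<Rightarrow> bool"
  proof
    assume H: "\<forall>t\<in>{1..<n + 1}. P (t - 1)"
    show "\<forall>t\<in>{..<n}. P t"
    proof
      fix t assume "t \<in> {..<n}"
      then show "P t"
        using H[rule_format, of "Suc t"] by simp
    qed
  qed auto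
  have far: "(int i - int j) mod int N \<notin> {0..int K} \<longleftrightarrow> int K < cdist (int N) (int j) (int i)" for i j
    using assms by (auto simp: cdist_def)
  have "(\<forall>t\<in>{1..<length js + 1}. int K < cdist (int N) (int (js ! (t - 1))) (int i))
      \<longleftrightarrow> (\<forall>t\<in>{..<length js}. int K < cdist (int N) (int (js ! t)) (int i))" for i
    by (rule shift)
  then have "missed N K (length js + 1) js
      = {i \<in> {1..N}. \<forall>t\<in>{..<length js}. int K < cdist (int N) (int (js ! t)) (int i)}"
    unfolding missed_def far by simp
  then show ?thesis
    unfolding M_def positions_def
    using card_int_interval_filter[where Q = "\<lambda>i. \<forall>t\<in>{..<length js}. int K < cdist (int N) (int (js ! t)) i"]
    by simp
qed

lemma positions_mem:
  assumes "set js \<subseteq> {1..N}" "t < length js"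
  shows "positions js t \<in> {1..int N}"
proof -
  have "js ! t \<in> {1..N}"
    using assms nth_mem[of t js] by blast
  then show ?thesis
    unfolding positions_def by simp
qed

lemma cyclic_points_positions:
  assumes js: "distinct js" "set js \<subseteq> {1..N}" "2 \<le> length js"
  shows "cyclic_points (int N) {..<length js} (positions js)"
proof
  have "0 < length js"
    using js(3) by linarith
  then have "positions js 0 \<in> {1..int N}"
    by (rule positions_mem[OF js(2)])
  then show "0 < int N"
    by simp
  show "2 \<le> card {..<length js}"
    using js by simp
  show "inj_on (\<lambda>t. positions js t mod int N) {..<length js}"
  proof (rule inj_onI)
    fix s t assume "s \<in> {..<length js}" "t \<in> {..<length js}"
      and eq: "positions js s mod int N = positions js t mod int N"
    then have "s < length js" "t < length js"
      by simp_all
    then have "positions js s = positions js t"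
      using inj_onD[OF inj_on_mod_interval eq positions_mem[OF js(2)] positions_mem[OF js(2)]] by simp
    then show "s = t"
      using \<open>s < length js\<close> \<open>t < length js\<close> js(1) unfolding positions_def
      by (simp add: nth_eq_iff_index_eq)
  qed
qed

definition gap_code :: "nat \<Rightarrow> nat \<Rightarrow> nat list \<Rightarrow> nat \<times> (nat \<times> nat) set \<times> (nat \<Rightarrow> int)" where
  "gap_code N K js =
    (js ! 0, cyclic_points.offset_order (int N) {..<length js} (positions js) 0,
     restrict (\<lambda>t. cyclic_points.gap (int N) {..<length js} (positions js) t - (int K + 1))
       {..<length js})"

lemma gap_code_mem:
  assumes js: "distinct js" "set js \<subseteq> {1..N}" "2 \<le> length js"
  defines "T \<equiv> {..<length js}"
  shows "gap_code N K js
    \<in> {1..N} \<times> Pow (T \<times> T)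
      \<times> excess_vectors T (M N K (length js + 1) js) (int N - int (length js) * (int K + 1))"
proof -
  interpret cyclic_points "int N" T "positions js"
    unfolding T_def by (rule cyclic_points_positions[OF js])
  have "M N K (length js + 1) js = card {i \<in> {1..int N}. \<forall>t\<in>T. int K < cdist (int N) (positions js t) i}"
    using M_eq_card_far_points modulus_pos unfolding T_def by simp
  then have "restrict (\<lambda>t. gap t - (int K + 1)) T
      \<in> excess_vectors T (M N K (length js + 1) js) (int N - int (length js) * (int K + 1))"
    using gap_excess_mem_excess_vectors[of "int K"] unfolding T_def by simp
  moreover have "0 < length js"
    using js(3) by linarith
  then have "js ! 0 \<in> set js"
    by (rule nth_mem)
  then have "js ! 0 \<in> {1..N}"
    using js(2) by blast
  ultimately show ?thesis
    using offset_order_subset[of 0] unfolding gap_code_def T_def by simp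
qed

lemma inj_on_gap_code:
  assumes r: "2 \<le> r"
  shows "inj_on (gap_code N K) {js. length js = r \<and> distinct js \<and> set js \<subseteq> {1..N}}"
proof (rule inj_onI)
  fix js js'
  assume "js \<in> {js. length js = r \<and> distinct js \<and> set js \<subseteq> {1..N}}"
    and "js' \<in> {js. length js = r \<and> distinct js \<and> set js \<subseteq> {1..N}}"
  then have js: "length js = r" "distinct js" "set js \<subseteq> {1..N}"
    and js': "length js' = r" "distinct js'" "set js' \<subseteq> {1..N}"
    by simp_all
  assume eq: "gap_code N K js = gap_code N K js'"
  let ?T = "{..<r}"
  have points: "cyclic_points (int N) ?T (positions js)" "cyclic_points (int N) ?T (positions js')"
    using cyclic_points_positions[of js N] cyclic_points_positions[of js' N] js js' r by simp_all
  have gaps: "cyclic_points.gap (int N) ?T (positions js) t = cyclic_points.gap (int N) ?T (positions js') t"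
    if "t \<in> ?T" for t
    using fun_cong[OF arg_cong[OF eq, of "\<lambda>x. snd (snd x)"], of t] js(1) js'(1) that
    unfolding gap_code_def by simp
  have "0 \<in> ?T" "positions js 0 = positions js' 0"
    "cyclic_points.offset_order (int N) ?T (positions js) 0
      = cyclic_points.offset_order (int N) ?T (positions js') 0"
    using eq js(1) js'(1) r unfolding gap_code_def positions_def by simp_all
  note residues = cyclic_points_residues_eqI[OF points this gaps]
  have "js ! t = js' ! t" if "t < r" for t
  proof -
    have "positions js t \<in> {1..int N}" "positions js' t \<in> {1..int N}"
      using positions_mem[of js N t] positions_mem[of js' N t] js js' that by simp_all
    then have "positions js t = positions js' t"
      using inj_onD[OF inj_on_mod_interval residues] that by simp
    then show ?thesis
      unfolding positions_def by simp
  qed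
  then show "js = js'"
    using js(1) js'(1) by (simp add: nth_equalityI)
qed

lemma card_lists_with_M_le:
  fixes r N K \<iota> :: nat
  assumes r: "2 \<le> r" and N: "N \<le> r * (K + 1)" and \<iota>: "1 \<le> \<iota>"
  shows "card {js. length js = r \<and> distinct js \<and> set js \<subseteq> {1..N} \<and> M N K (r + 1) js = \<iota>}
    \<le> N * 2 ^ (r * r) * (r ^ 2 * (2 * \<iota> + r * (K + 1) + 1 - N) ^ (r - 2))"
proof -
  define A where "A = {js. length js = r \<and> distinct js \<and> set js \<subseteq> {1..N} \<and> M N K (r + 1) js = \<iota>}"
  define T where "T = {..<r}"
  define c where "c = int N - int r * (int K + 1)"
  define B where "B = {1..N} \<times> Pow (T \<times> T) \<times> excess_vectors T \<iota> c"
  have "inj_on (gap_code N K) A"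
    using inj_on_gap_code[OF r] by (rule inj_on_subset) (auto simp: A_def)
  moreover have "gap_code N K ` A \<subseteq> B"
  proof (rule image_subsetI)
    fix js assume "js \<in> A"
    then have "distinct js" "set js \<subseteq> {1..N}" "2 \<le> length js" "length js = r" "M N K (r + 1) js = \<iota>"
      unfolding A_def using r by simp_all
    then show "gap_code N K js \<in> B"
      using gap_code_mem[of js N K] unfolding B_def T_def c_def by simp
  qed
  moreover have "int N \<le> int (r * (K + 1))"
    using N by (simp only: of_nat_le_iff)
  then have "int N \<le> int r * (int K + 1)"
    by (simp only: of_nat_mult of_nat_add of_nat_1)
  then have "c < int \<iota>"
    using \<iota> unfolding c_def by linarith
  then have "finite B"
    unfolding B_def T_def by (simp add: finite_excess_vectors)
  ultimately have "card A \<le> card B"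
    by (rule card_inj_on_le)
  also have "\<dots> = N * 2 ^ (r * r) * card (excess_vectors T \<iota> c)"
    by (simp add: B_def card_cartesian_product card_Pow T_def)
  also have "card (excess_vectors T \<iota> c) \<le> r ^ 2 * nat (2 * int \<iota> - c + 1) ^ (r - 2)"
    using card_excess_vectors_le[of T \<iota> c] \<open>c < int \<iota>\<close> \<iota> unfolding T_def by simp
  also have "nat (2 * int \<iota> - c + 1) = 2 * \<iota> + r * (K + 1) + 1 - N"
  proof -
    have "N \<le> 2 * \<iota> + r * (K + 1) + 1"
      using N by linarith
    then have "int (2 * \<iota> + r * (K + 1) + 1 - N) = 2 * int \<iota> - c + 1"
      unfolding c_def by (simp add: of_nat_diff algebra_simps)
    then show ?thesis
      by (metis nat_int)
  qed
  finally show ?thesis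
    unfolding A_def by simp
qed

lemma excess_range_le:
  fixes r N K \<iota> :: nat
  assumes K: "1 \<le> K" and N: "N \<le> r * (K + 1)" and \<iota>: "1 \<le> \<iota>"
  shows "real (2 * \<iota> + r * (K + 1) + 1 - N) \<le> 3 * ((real r - real N / real (K + 1)) * real K + real \<iota>)"
proof -
  define y where "y = real r - real N / real (K + 1)"
  have "real N \<le> real (r * (K + 1))"
    using N by (simp only: of_nat_le_iff)
  also have "\<dots> = real r * (real K + 1)"
    by (simp only: of_nat_mult of_nat_add of_nat_1)
  finally have "real N \<le> real r * (real K + 1)" .
  then have "real N / (real K + 1) \<le> real r * (real K + 1) / (real K + 1)"
    by (rule divide_right_mono) simp
  then have "0 \<le> y"
    unfolding y_def by (simp add: add.commute)
  have y_times: "y * (real K + 1) = real r * (real K + 1) - real N"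
    unfolding y_def by (simp add: field_simps)
  have "N \<le> 2 * \<iota> + r * (K + 1) + 1"
    using N by linarith
  then have "real (2 * \<iota> + r * (K + 1) + 1 - N) = 2 * real \<iota> + real r * (real K + 1) + 1 - real N"
    by (simp add: of_nat_diff algebra_simps)
  also have "\<dots> = 2 * real \<iota> + y * real K + y + 1"
    using y_times by (simp add: distrib_left)
  also have "\<dots> \<le> 3 * (y * real K + real \<iota>)"
  proof -
    have "y \<le> y * real K" "0 \<le> y * real K"
      using K \<open>0 \<le> y\<close> mult_left_mono[of 1 "real K" y] by auto
    moreover have "1 \<le> real \<iota>"
      using \<iota> by simp
    ultimately show ?thesis
      unfolding distrib_left by linarith
  qed
  finally show ?thesis
    unfolding y_def .
qed

theorem lemma5p1:
  fixes r :: nat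
  assumes "r \<ge> 2"
  shows "\<exists>C::real. \<forall>K N \<iota> :: nat.
    K \<ge> 1 \<longrightarrow> N \<ge> 1 \<longrightarrow> N \<le> r * (K + 1) \<longrightarrow> \<iota> \<ge> 1 \<longrightarrow>
    real (card {js :: nat list. length js = r \<and> distinct js \<and> set js \<subseteq> {1..N}
                  \<and> M N K (r + 1) js = \<iota>})
      \<le> C * real N * ((real r - real N / real (K + 1)) * real K + real \<iota>) ^ (r - 2)"
proof (intro exI allI impI)
  fix K N \<iota> :: nat
  assume K: "K \<ge> 1" and "N \<ge> 1" and N: "N \<le> r * (K + 1)" and \<iota>: "\<iota> \<ge> 1"
  let ?A = "{js :: nat list. length js = r \<and> distinct js \<and> set js \<subseteq> {1..N} \<and> M N K (r + 1) js = \<iota>}"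
  let ?s = "2 * \<iota> + r * (K + 1) + 1 - N"
  let ?y = "real r - real N / real (K + 1)"
  have "real (card ?A) \<le> real (N * 2 ^ (r * r) * (r ^ 2 * ?s ^ (r - 2)))"
    using card_lists_with_M_le[OF assms N \<iota>] by (simp only: of_nat_le_iff)
  also have "\<dots> = real N * 2 ^ (r * r) * (real r ^ 2 * real ?s ^ (r - 2))"
    by simp
  also have "\<dots> \<le> real N * 2 ^ (r * r) * (real r ^ 2 * (3 * (?y * real K + real \<iota>)) ^ (r - 2))"
    using excess_range_le[OF K N \<iota>] by (intro mult_left_mono power_mono) auto
  also have "\<dots> = (2 ^ (r * r) * real r ^ 2 * 3 ^ (r - 2)) * real N * (?y * real K + real \<iota>) ^ (r - 2)"
    unfolding power_mult_distrib by (simp only: mult_ac)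
  finally show "real (card ?A)
      \<le> (2 ^ (r * r) * real r ^ 2 * 3 ^ (r - 2)) * real N * (?y * real K + real \<iota>) ^ (r - 2)" .
qed

end
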